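(* Suppose $N$ carries a graded complementation and $X$ is a Macaulay basis of $M$. Then, as $\mathbf{k}$-vector spaces, \[N=M\oplus\Big\{n\in N:\ n_b\in N_b\ominus W_b(X)\text{ for all }b\in B\Big\}.\]
   Context: Standing setup. $\mathbf{k}$ is a field. $(A,+,0)$ is a finitely generated, cancellative commutative monoid with a total order $\le$ which is a well-order, such that $0<a$ for every $a\neq0$ and $a\le a'$ implies $a+c\le a'+c$. $R=\bigoplus_{a\in A}R_a$ is a commutative Noetherian $\mathbf{k}$-algebra graded by $A$. $B$ is a well-ordered totally ordered set with an action $(a,b)\mapsto a\cdot b$ of $A$ with $0\cdot b=b$, $(a+a')\cdot b=a\cdot(a'\cdot b)$, monotone and cancellative in each argument. $N=\bigoplus_{b\in B}N_b$ is a Noetherian $R$-module graded by $B$ ($R_aN_b\subseteq N_{a\cdot b}$), $M\subseteq N$ an $R$-submodule; $n_b$ denotes the degree-$b$ component of $n\in N$. For $m\ne0$, $\deg m=\max\{b:m_b\ne0\}$, $\operatorname{lf}(m)=m_{\deg m}$. A finite set $X=\{m_1,\dots,m_n\}$ of nonzero elements of $M$ is a Macaulay basis of $M$ if the $R$-submodule generated by $\{\operatorname{lf}(p):0\ne p\in M\}$ equals that generated by $\operatorname{lf}(m_1),\dots,\operatorname{lf}(m_n)$. $W_b(X)=\operatorname{span}_{\mathbf{k}}\{r\operatorname{lf}(x): x\in X,\ r\in R\text{ homogeneous},\ r\operatorname{lf}(x)\in N_b\}$. A graded complementation on $N$ assigns to each $b$ and each subspace $W\le N_b$ a subspace $W^c\le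 N_b$ with $W\oplus W^c=N_b$; $U\ominus W:=U\cap W^c$. *)

theory Defs
  imports Complex_Main "HOL-Library.Multiset"
begin

definition fin_gen_monoid :: "'a::comm_monoid_add itself \<Rightarrow> bool" where
  "fin_gen_monoid _ \<longleftrightarrow>
     (\<exists>G::'a set. finite G \<and> (\<forall>a::'a. \<exists>ms. set_mset ms \<subseteq> G \<and> a = sum_mset ms))"

(* A decomposition V = (direct sum over i) V_i, given by the family of
   projections c i : V -> V_i onto the components (V_i = range (c i)). *)
definition graded_comp :: "('i \<Rightarrow> 'v::ab_group_add \<Rightarrow> 'v) \<Rightarrow> bool" where
  "graded_comp c \<longleftrightarrow>
     (\<forall>i x y. c i (x + y) = c i x + c i y) \<and>
     (\<forall>x. finite {i. c i x \<noteq> 0}) \<and>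
     (\<forall>x. x = (\<Sum>i\<in>{i. c i x \<noteq> 0}. c i x)) \<and>
     (\<forall>i j x. c i (c j x) = (if i = j then c j x else 0))"

definition hcomp :: "('i \<Rightarrow> 'v::ab_group_add \<Rightarrow> 'v) \<Rightarrow> 'i \<Rightarrow> 'v set" where
  "hcomp c i = {x. c i x = x}"

definition alg_map :: "('k::field \<Rightarrow> 'r::comm_ring_1) \<Rightarrow> bool" where
  "alg_map \<phi> \<longleftrightarrow> \<phi> 1 = 1 \<and> (\<forall>x y. \<phi> (x + y) = \<phi> x + \<phi> y) \<and> (\<forall>x y. \<phi> (x * y) = \<phi> x * \<phi> y)"

definition noetherian_module :: "('r::comm_ring_1 \<Rightarrow> 'n::ab_group_add \<Rightarrow> 'n) \<Rightarrow> bool" where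
  "noetherian_module s \<longleftrightarrow>
     (\<forall>U. module.subspace s U \<longrightarrow> (\<exists>F. finite F \<and> U = module.span s F))"

definition noetherian_ring :: "'r::comm_ring_1 itself \<Rightarrow> bool" where
  "noetherian_ring _ \<longleftrightarrow> noetherian_module ((*) :: 'r \<Rightarrow> 'r \<Rightarrow> 'r)"

definition gdeg :: "('b::linorder \<Rightarrow> 'n::ab_group_add \<Rightarrow> 'n) \<Rightarrow> 'n \<Rightarrow> 'b" where
  "gdeg nc m = Max {b. nc b m \<noteq> 0}"

definition lf :: "('b::linorder \<Rightarrow> 'n::ab_group_add \<Rightarrow> 'n) \<Rightarrow> 'n \<Rightarrow> 'n" where
  "lf nc m = nc (gdeg nc m) m"

definition macaulay_basis ::
  "('r::comm_ring_1 \<Rightarrow> 'n::ab_group_add \<Rightarrow> 'n) \<Rightarrow> ('b::linorder \<Rightarrow> 'n \<Rightarrow> 'n) \<Rightarrow> 'n set \<Rightarrow> 'n set \<Rightarrow> bool" where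
  "macaulay_basis s nc M X \<longleftrightarrow>
     finite X \<and> X \<subseteq> M - {0} \<and>
     module.span s {lf nc p | p. p \<in> M \<and> p \<noteq> 0} = module.span s (lf nc ` X)"

definition Wsp ::
  "('k::field \<Rightarrow> 'n::ab_group_add \<Rightarrow> 'n) \<Rightarrow> ('r::comm_ring_1 \<Rightarrow> 'n \<Rightarrow> 'n) \<Rightarrow>
   ('a \<Rightarrow> 'r \<Rightarrow> 'r) \<Rightarrow> ('b::linorder \<Rightarrow> 'n \<Rightarrow> 'n) \<Rightarrow> 'n set \<Rightarrow> 'b \<Rightarrow> 'n set" where
  "Wsp ks s rc nc X b = module.span ks
     {s r (lf nc x) | x r. x \<in> X \<and> (\<exists>a. r \<in> hcomp rc a) \<and> s r (lf nc x) \<in> hcomp nc b}"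

definition direct_sum :: "('k::field \<Rightarrow> 'n::ab_group_add \<Rightarrow> 'n) \<Rightarrow> 'n set \<Rightarrow> 'n set \<Rightarrow> 'n set \<Rightarrow> bool" where
  "direct_sum ks T U V \<longleftrightarrow> module.subspace ks U \<and> module.subspace ks V \<and>
     U \<subseteq> T \<and> V \<subseteq> T \<and> U \<inter> V = {0} \<and> (\<forall>t\<in>T. \<exists>u\<in>U. \<exists>v\<in>V. t = u + v)"

definition graded_complementation ::
  "('k::field \<Rightarrow> 'n::ab_group_add \<Rightarrow> 'n) \<Rightarrow> ('b \<Rightarrow> 'n \<Rightarrow> 'n) \<Rightarrow> ('b \<Rightarrow> 'n set \<Rightarrow> 'n set) \<Rightarrow> bool" where
  "graded_complementation ks nc cpl \<longleftrightarrow>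
     (\<forall>b W. module.subspace ks W \<and> W \<subseteq> hcomp nc b \<longrightarrow>
        direct_sum ks (hcomp nc b) W (cpl b W))"

definition gminus :: "('b \<Rightarrow> 'n set \<Rightarrow> 'n set) \<Rightarrow> 'b \<Rightarrow> 'n set \<Rightarrow> 'n set \<Rightarrow> 'n set" where
  "gminus cpl b U W = U \<inter> cpl b W"

end

theory Submission
  imports Defs
begin

(* A nonzero m in M has its leading form in the R-span of the leading forms of X, and the
   degree-b component of that span lies in W_b(X); so if all components of m lie in the
   complements, m has leading form 0. Conversely, by induction on a degree bound b, split the
   top component n_b = w + w' with w in W_b(X) and w' in its complement. For homogeneous r and
   x in X the element r x of M has top component r lf(x), so w is the top component of some
   element of M of degree at most b, and removing it and w' lowers the degree of n. *)

lemma graded_comp_add: "graded_comp c \<Longrightarrow> c i (x + y) = c i x + c i y"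
  unfolding graded_comp_def by blast

lemma graded_comp_finite: "graded_comp c \<Longrightarrow> finite {i. c i x \<noteq> 0}"
  unfolding graded_comp_def by blast

lemma graded_comp_decompose: "graded_comp c \<Longrightarrow> x = (\<Sum>i | c i x \<noteq> 0. c i x)"
  unfolding graded_comp_def by blast

lemma graded_comp_comp: "graded_comp c \<Longrightarrow> c i (c j x) = (if i = j then c j x else 0)"
  unfolding graded_comp_def by blast

lemma graded_comp_additive: "graded_comp c \<Longrightarrow> additive (c i)"
  by unfold_locales (rule graded_comp_add)

lemma graded_comp_zero: "graded_comp c \<Longrightarrow> c i 0 = 0"
  by (rule additive.zero[OF graded_comp_additive])

lemma graded_comp_diff: "graded_comp c \<Longrightarrow> c i (x - y) = c i x - c i y"
  by (rule additive.diff[OF graded_comp_additive])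

lemma graded_comp_sum: "graded_comp c \<Longrightarrow> c i (sum f S) = (\<Sum>j\<in>S. c i (f j))"
  by (rule additive.sum[OF graded_comp_additive])

lemma graded_comp_in_hcomp: "graded_comp c \<Longrightarrow> c i x \<in> hcomp c i"
  unfolding hcomp_def by (simp add: graded_comp_comp)

lemma graded_comp_hcomp: "graded_comp c \<Longrightarrow> x \<in> hcomp c i \<Longrightarrow> c j x = (if j = i then x else 0)"
  unfolding hcomp_def using graded_comp_comp[of c j i x] by simp

lemma graded_comp_ex_nonzero:
  assumes "graded_comp c" "x \<noteq> 0"
  shows "\<exists>i. c i x \<noteq> 0"
proof (rule ccontr)
  assume "\<not> ?thesis"
  then have "(\<Sum>i | c i x \<noteq> 0. c i x) = 0" by simp
  with graded_comp_decompose[OF assms(1)] assms(2) show False by simp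
qed

lemma lf_nonzero: "graded_comp nc \<Longrightarrow> m \<noteq> 0 \<Longrightarrow> lf nc m \<noteq> 0"
  unfolding lf_def gdeg_def
  using Max_in[OF graded_comp_finite] graded_comp_ex_nonzero by fastforce

lemma le_gdeg: "graded_comp nc \<Longrightarrow> nc b m \<noteq> 0 \<Longrightarrow> b \<le> gdeg nc m"
  unfolding gdeg_def by (simp add: graded_comp_finite)

lemma graded_comp_above_gdeg: "graded_comp nc \<Longrightarrow> gdeg nc m < b \<Longrightarrow> nc b m = 0"
  using le_gdeg leD by blast

lemma lf_eq_component_gdeg: "graded_comp nc \<Longrightarrow> nc (gdeg nc m) (lf nc m) = lf nc m"
  unfolding lf_def by (simp add: graded_comp_comp)

lemma module_restrict_scalars:
  assumes "module s" "alg_map \<phi>"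
  shows "module (\<lambda>c. s (\<phi> c))"
proof -
  interpret module s by (rule assms(1))
  have "\<phi> 1 = 1" "\<And>x y. \<phi> (x + y) = \<phi> x + \<phi> y" "\<And>x y. \<phi> (x * y) = \<phi> x * \<phi> y"
    using assms(2) unfolding alg_map_def by auto
  then show ?thesis
    by unfold_locales (simp_all add: scale_right_distrib scale_left_distrib)
qed

definition graded_complement ::
  "('b \<Rightarrow> 'n set \<Rightarrow> 'n set) \<Rightarrow> ('b \<Rightarrow> 'n::ab_group_add \<Rightarrow> 'n) \<Rightarrow> ('b \<Rightarrow> 'n set) \<Rightarrow> 'n set" where
  "graded_complement cpl nc W = {n. \<forall>b. nc b n \<in> gminus cpl b (hcomp nc b) (W b)}"

locale graded_vector_space = module scale
  for scale :: "'k::field \<Rightarrow> 'n::ab_group_add \<Rightarrow> 'n" +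
  fixes nc :: "'b::wellorder \<Rightarrow> 'n \<Rightarrow> 'n"
  assumes graded: "graded_comp nc"
    and component_scale: "nc b (scale c n) = scale c (nc b n)"
begin

lemma subspace_hcomp: "subspace (hcomp nc b)"
  unfolding subspace_def hcomp_def
  by (simp add: graded_comp_add[OF graded] graded_comp_zero[OF graded] component_scale)

lemma subspace_top_components:
  assumes "subspace M"
  shows "subspace {nc b m | m. m \<in> M \<and> (\<forall>b'>b. nc b' m = 0)}"
  unfolding subspace_def
proof (intro conjI ballI allI; clarify)
  show "\<exists>m. 0 = nc b m \<and> m \<in> M \<and> (\<forall>b'>b. nc b' m = 0)"
    using subspace_0[OF assms] graded_comp_zero[OF graded] by metis
next
  fix m m' assume "m \<in> M" "\<forall>b'>b. nc b' m = 0" "m' \<in> M" "\<forall>b'>b. nc b' m' = 0"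
  then show "\<exists>m''. nc b m + nc b m' = nc b m'' \<and> m'' \<in> M \<and> (\<forall>b'>b. nc b' m'' = 0)"
    using subspace_add[OF assms] graded_comp_add[OF graded] by (intro exI[of _ "m + m'"]) auto
next
  fix c m assume "m \<in> M" "\<forall>b'>b. nc b' m = 0"
  then show "\<exists>m'. scale c (nc b m) = nc b m' \<and> m' \<in> M \<and> (\<forall>b'>b. nc b' m' = 0)"
    using subspace_scale[OF assms] component_scale by (intro exI[of _ "scale c m"]) auto
qed

context
  fixes cpl :: "'b \<Rightarrow> 'n set \<Rightarrow> 'n set" and W :: "'b \<Rightarrow> 'n set"
  assumes complementation: "graded_complementation scale nc cpl"
    and subspace_W: "\<And>b. subspace (W b)"
    and W_hcomp: "\<And>b. W b \<subseteq> hcomp nc b"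
begin

lemma direct_sum_W_cpl: "direct_sum scale (hcomp nc b) (W b) (cpl b (W b))"
  using complementation subspace_W W_hcomp unfolding graded_complementation_def by blast

lemma subspace_cpl: "subspace (cpl b (W b))"
  and cpl_subset_hcomp: "cpl b (W b) \<subseteq> hcomp nc b"
  and W_inter_cpl: "W b \<inter> cpl b (W b) = {0}"
  using direct_sum_W_cpl unfolding direct_sum_def by blast+

lemma hcomp_decompose: "x \<in> hcomp nc b \<Longrightarrow> \<exists>w\<in>W b. \<exists>w'\<in>cpl b (W b). x = w + w'"
  using direct_sum_W_cpl unfolding direct_sum_def by blast

lemma mem_graded_complement_iff:
  "n \<in> graded_complement cpl nc W \<longleftrightarrow> (\<forall>b. nc b n \<in> cpl b (W b))"
  unfolding graded_complement_def gminus_def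
  using graded_comp_in_hcomp[OF graded] by blast

lemma subspace_graded_complement: "subspace (graded_complement cpl nc W)"
  unfolding subspace_def
  using subspace_cpl[THEN subspace_0] subspace_cpl[THEN subspace_add]
    subspace_cpl[THEN subspace_scale]
  by (simp add: mem_graded_complement_iff graded_comp_zero[OF graded]
      graded_comp_add[OF graded] component_scale)

lemma cpl_subset_graded_complement: "cpl b (W b) \<subseteq> graded_complement cpl nc W"
proof
  fix w assume w: "w \<in> cpl b (W b)"
  then have "w \<in> hcomp nc b" using cpl_subset_hcomp by blast
  then show "w \<in> graded_complement cpl nc W"
    unfolding mem_graded_complement_iff
    using w subspace_0[OF subspace_cpl] by (simp add: graded_comp_hcomp[OF graded])
qed

lemma graded_complement_inter:
  assumes "\<And>m. m \<in> M \<Longrightarrow> m \<noteq> 0 \<Longrightarrow> lf nc m \<in> W (gdeg nc m)"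
  shows "M \<inter> graded_complement cpl nc W \<subseteq> {0}"
proof clarify
  fix m assume m: "m \<in> M" "m \<in> graded_complement cpl nc W"
  show "m = 0"
  proof (rule ccontr)
    assume "m \<noteq> 0"
    moreover have "lf nc m \<in> cpl (gdeg nc m) (W (gdeg nc m))"
      using m(2) unfolding mem_graded_complement_iff lf_def by blast
    ultimately show False
      using assms[OF m(1)] lf_nonzero[OF graded] W_inter_cpl by blast
  qed
qed

lemma graded_complement_sum_bounded:
  assumes M: "subspace M"
    and lift: "\<And>b. W b \<subseteq> {nc b m | m. m \<in> M \<and> (\<forall>b'>b. nc b' m = 0)}"
    and bounded: "\<forall>b'>b. nc b' n = 0"
  shows "\<exists>m\<in>M. \<exists>c\<in>graded_complement cpl nc W. n = m + c"
  using bounded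
proof (induction b arbitrary: n rule: less_induct)
  case (less b)
  let ?C = "graded_complement cpl nc W"
  obtain w w' where w: "w \<in> W b" and w': "w' \<in> cpl b (W b)" and nb: "nc b n = w + w'"
    using hcomp_decompose[OF graded_comp_in_hcomp[OF graded]] by blast
  obtain m0 where m0: "m0 \<in> M" "\<forall>b'>b. nc b' m0 = 0" "nc b m0 = w"
    using lift w by blast
  have w'_hcomp: "w' \<in> hcomp nc b"
    using w' cpl_subset_hcomp by blast
  define n1 where "n1 = n - m0 - w'"
  have n1_top: "nc b' n1 = 0" if "b \<le> b'" for b'
    using that less.prems m0 nb graded_comp_hcomp[OF graded w'_hcomp]
    by (cases "b' = b") (simp_all add: n1_def graded_comp_diff[OF graded])
  have "\<exists>m1\<in>M. \<exists>c1\<in>?C. n1 = m1 + c1"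
  proof (cases "n1 = 0")
    case True
    then show ?thesis
      using subspace_0[OF M] subspace_0[OF subspace_graded_complement] by (metis add_0)
  next
    case False
    then have "gdeg nc n1 < b"
      using n1_top lf_nonzero[OF graded] unfolding lf_def by (meson not_le)
    then show ?thesis
      using less.IH graded_comp_above_gdeg[OF graded] by blast
  qed
  then obtain m1 c1 where "m1 \<in> M" "c1 \<in> ?C" "n1 = m1 + c1" by blast
  moreover have "n = (m0 + m1) + (w' + c1)" using \<open>n1 = m1 + c1\<close>
    unfolding n1_def by (simp add: algebra_simps)
  ultimately show ?case
    using m0(1) w' cpl_subset_graded_complement subspace_add[OF M]
      subspace_add[OF subspace_graded_complement] by blast
qed

lemma direct_sum_graded_complement:
  assumes M: "subspace M"
    and leading: "\<And>m. m \<in> M \<Longrightarrow> m \<noteq> 0 \<Longrightarrow> lf nc m \<in> W (gdeg nc m)"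
    and lift: "\<And>b. W b \<subseteq> {nc b m | m. m \<in> M \<and> (\<forall>b'>b. nc b' m = 0)}"
  shows "direct_sum scale UNIV M (graded_complement cpl nc W)"
  unfolding direct_sum_def
proof (intro conjI M subspace_graded_complement subset_UNIV ballI)
  show "M \<inter> graded_complement cpl nc W = {0}"
    using graded_complement_inter[OF leading] subspace_0[OF M]
      subspace_0[OF subspace_graded_complement] by blast
next
  fix n :: 'n
  show "\<exists>m\<in>M. \<exists>c\<in>graded_complement cpl nc W. n = m + c"
    using graded_complement_sum_bounded[OF M lift] graded_comp_above_gdeg[OF graded] by blast
qed

end

end

locale graded_module = module s
  for s :: "'r::comm_ring_1 \<Rightarrow> 'n::ab_group_add \<Rightarrow> 'n" +
  fixes \<phi> :: "'k::field \<Rightarrow> 'r"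
    and rc :: "'a \<Rightarrow> 'r \<Rightarrow> 'r"
    and act :: "'a \<Rightarrow> 'b::wellorder \<Rightarrow> 'b"
    and nc :: "'b \<Rightarrow> 'n \<Rightarrow> 'n"
  assumes alg: "alg_map \<phi>"
    and R_graded: "graded_comp rc"
    and N_graded: "graded_comp nc"
    and component_scalar: "nc b (s (\<phi> c) n) = s (\<phi> c) (nc b n)"
    and component_homogeneous_scale: "nc (act a b) (s (rc a r) (nc b n)) = s (rc a r) (nc b n)"
    and act_mono: "b \<le> b' \<Longrightarrow> act a b \<le> act a b'"
    and act_cancel: "act a b = act a b' \<Longrightarrow> b = b'"
begin

sublocale K: graded_vector_space "\<lambda>c. s (\<phi> c)" nc
  using module_restrict_scalars[OF module_axioms alg] N_graded component_scalar
  by (simp add: graded_vector_space_def graded_vector_space_axioms_def)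

abbreviation W :: "'n set \<Rightarrow> 'b \<Rightarrow> 'n set" where
  "W X \<equiv> Wsp (\<lambda>c. s (\<phi> c)) s rc nc X"

lemma subspace_restrict_scalars: "subspace M \<Longrightarrow> K.subspace M"
  unfolding subspace_def K.subspace_def by blast

lemma scale_hcomp: "r \<in> hcomp rc a \<Longrightarrow> v \<in> hcomp nc b \<Longrightarrow> s r v \<in> hcomp nc (act a b)"
  using component_homogeneous_scale[of a b r v] unfolding hcomp_def by simp

lemma subspace_W: "K.subspace (W X b)"
  unfolding Wsp_def by (rule K.subspace_span)

lemma W_hcomp: "W X b \<subseteq> hcomp nc b"
  unfolding Wsp_def by (rule K.span_minimal[OF _ K.subspace_hcomp]) blast

lemma component_homogeneous_scale_lf_mem_W:
  assumes x: "x \<in> X" and r: "r \<in> hcomp rc a"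
  shows "nc b (s r (lf nc x)) \<in> W X b"
proof -
  have y: "s r (lf nc x) \<in> hcomp nc (act a (gdeg nc x))"
    unfolding lf_def by (rule scale_hcomp[OF r graded_comp_in_hcomp[OF N_graded]])
  show ?thesis
  proof (cases "b = act a (gdeg nc x)")
    case True
    then have "s r (lf nc x) \<in> W X b"
      unfolding Wsp_def by (intro K.span_base) (use x r y in blast)
    then show ?thesis using y True unfolding hcomp_def by simp
  next
    case False
    then show ?thesis
      using graded_comp_hcomp[OF N_graded y, of b] K.subspace_0[OF subspace_W] by simp
  qed
qed

lemma component_scale_lf_mem_W:
  assumes x: "x \<in> X"
  shows "nc b (s r (lf nc x)) \<in> W X b"
proof -
  have "s r (lf nc x) = (\<Sum>a | rc a r \<noteq> 0. s (rc a r) (lf nc x))"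
    using scale_sum_left graded_comp_decompose[OF R_graded, of r] by metis
  then have "nc b (s r (lf nc x)) = (\<Sum>a | rc a r \<noteq> 0. nc b (s (rc a r) (lf nc x)))"
    by (simp add: graded_comp_sum[OF N_graded])
  also have "\<dots> \<in> W X b"
    by (intro K.subspace_sum[OF subspace_W]
        component_homogeneous_scale_lf_mem_W[OF x graded_comp_in_hcomp[OF R_graded]])
  finally show ?thesis .
qed

lemma component_span_lf_mem_W:
  assumes "y \<in> span (lf nc ` X)"
  shows "nc b y \<in> W X b"
proof -
  obtain t u where t: "t \<subseteq> lf nc ` X" and y: "y = (\<Sum>v\<in>t. s (u v) v)"
    using assms unfolding span_explicit by blast
  have "nc b y = (\<Sum>v\<in>t. nc b (s (u v) v))"
    unfolding y by (rule graded_comp_sum[OF N_graded])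
  also have "\<dots> \<in> W X b"
    using t component_scale_lf_mem_W by (intro K.subspace_sum[OF subspace_W]) blast
  finally show ?thesis .
qed

lemma macaulay_basis_lf_mem_W:
  assumes "macaulay_basis s nc M X" "m \<in> M" "m \<noteq> 0"
  shows "lf nc m \<in> W X (gdeg nc m)"
proof -
  have "lf nc m \<in> span (lf nc ` X)"
    using assms span_base[of "lf nc m" "{lf nc p | p. p \<in> M \<and> p \<noteq> 0}"]
    unfolding macaulay_basis_def by blast
  then show ?thesis
    using component_span_lf_mem_W lf_eq_component_gdeg[OF N_graded] by metis
qed

lemma top_component_homogeneous_scale:
  assumes r: "r \<in> hcomp rc a"
  shows "\<forall>b>act a (gdeg nc x). nc b (s r x) = 0"
    and "nc (act a (gdeg nc x)) (s r x) = s r (lf nc x)"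
proof -
  let ?S = "{d. nc d x \<noteq> 0}"
  have hom: "s r (nc d x) \<in> hcomp nc (act a d)" for d
    by (rule scale_hcomp[OF r graded_comp_in_hcomp[OF N_graded]])
  have "s r x = (\<Sum>d\<in>?S. s r (nc d x))"
    using scale_sum_right graded_comp_decompose[OF N_graded, of x] by metis
  then have comp: "nc b (s r x) = (\<Sum>d\<in>?S. if b = act a d then s r (nc d x) else 0)" for b
    by (simp add: graded_comp_sum[OF N_graded] graded_comp_hcomp[OF N_graded hom])
  have le: "act a d \<le> act a (gdeg nc x)" if "d \<in> ?S" for d
    using that act_mono le_gdeg[OF N_graded] by blast
  show "\<forall>b>act a (gdeg nc x). nc b (s r x) = 0"
    unfolding comp using le by (intro allI impI sum.neutral ballI) (metis leD mem_Collect_eq)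
  have "nc (act a (gdeg nc x)) (s r x) = (\<Sum>d\<in>?S. if d = gdeg nc x then s r (nc d x) else 0)"
    unfolding comp by (rule sum.cong) (auto dest: act_cancel)
  also have "\<dots> = s r (lf nc x)"
    using graded_comp_finite[OF N_graded] unfolding lf_def by (auto simp: if_distrib)
  finally show "nc (act a (gdeg nc x)) (s r x) = s r (lf nc x)" .
qed

lemma W_lift:
  assumes M: "subspace M" and X: "X \<subseteq> M"
  shows "W X b \<subseteq> {nc b m | m. m \<in> M \<and> (\<forall>b'>b. nc b' m = 0)}"
  unfolding Wsp_def
proof (rule K.span_minimal[OF _ K.subspace_top_components[OF subspace_restrict_scalars[OF M]]],
    clarify)
  fix x r a
  assume x: "x \<in> X" and r: "r \<in> hcomp rc a" and h: "s r (lf nc x) \<in> hcomp nc b"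
  show "\<exists>m. s r (lf nc x) = nc b m \<and> m \<in> M \<and> (\<forall>b'>b. nc b' m = 0)"
  proof (cases "s r (lf nc x) = 0")
    case True
    then show ?thesis using subspace_0[OF M] graded_comp_zero[OF N_graded] by metis
  next
    case False
    have "s r (lf nc x) \<in> hcomp nc (act a (gdeg nc x))"
      unfolding lf_def by (rule scale_hcomp[OF r graded_comp_in_hcomp[OF N_graded]])
    with h False have "b = act a (gdeg nc x)"
      using graded_comp_hcomp[OF N_graded] by metis
    then show ?thesis
      using top_component_homogeneous_scale[OF r, of x] x X subspace_scale[OF M]
      by (intro exI[of _ "s r x"]) auto
  qed
qed

end

theorem mainTheorem5:
  fixes \<phi> :: "'k::field \<Rightarrow> 'r::comm_ring_1"
    and rc :: "'a::{cancel_comm_monoid_add, wellorder} \<Rightarrow> 'r \<Rightarrow> 'r"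
    and act :: "'a \<Rightarrow> 'b::wellorder \<Rightarrow> 'b"
    and s :: "'r \<Rightarrow> 'n::ab_group_add \<Rightarrow> 'n"
    and nc :: "'b \<Rightarrow> 'n \<Rightarrow> 'n"
    and M X :: "'n set"
    and cpl :: "'b \<Rightarrow> 'n set \<Rightarrow> 'n set"
  assumes A_fg: "fin_gen_monoid TYPE('a)"
    and A_pos: "\<And>a::'a. a \<noteq> 0 \<Longrightarrow> 0 < a"
    and A_mono: "\<And>a a' c::'a. a \<le> a' \<Longrightarrow> a + c \<le> a' + c"
    and R_alg: "alg_map \<phi>"
    and R_grad: "graded_comp rc"
    and R_klin: "\<And>a c x. rc a (\<phi> c * x) = \<phi> c * rc a x"
    and R_mult: "\<And>a a' x y. rc (a + a') (rc a x * rc a' y) = rc a x * rc a' y"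
    and R_noeth: "noetherian_ring TYPE('r)"
    and act_0: "\<And>b. act 0 b = b"
    and act_add: "\<And>a a' b. act (a + a') b = act a (act a' b)"
    and act_mono1: "\<And>a a' b. a \<le> a' \<Longrightarrow> act a b \<le> act a' b"
    and act_mono2: "\<And>a b b'. b \<le> b' \<Longrightarrow> act a b \<le> act a b'"
    and act_canc1: "\<And>a a' b. act a b = act a' b \<Longrightarrow> a = a'"
    and act_canc2: "\<And>a b b'. act a b = act a b' \<Longrightarrow> b = b'"
    and N_mod: "module s"
    and N_grad: "graded_comp nc"
    and N_klin: "\<And>b c n. nc b (s (\<phi> c) n) = s (\<phi> c) (nc b n)"
    and N_mult: "\<And>a b r n. nc (act a b) (s (rc a r) (nc b n)) = s (rc a r) (nc b n)"
    and N_noeth: "noetherian_module s"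
    and M_sub: "module.subspace s M"
    and cpl: "graded_complementation (\<lambda>c. s (\<phi> c)) nc cpl"
    and X_mac: "macaulay_basis s nc M X"
  shows "direct_sum (\<lambda>c. s (\<phi> c)) UNIV M
           {n. \<forall>b. nc b n \<in> gminus cpl b (hcomp nc b) (Wsp (\<lambda>c. s (\<phi> c)) s rc nc X b)}"
proof -
  interpret graded_module s \<phi> rc act nc
    using N_mod R_alg R_grad N_grad N_klin N_mult act_mono2 act_canc2
    by (simp add: graded_module_def graded_module_axioms_def)
  have "X \<subseteq> M" using X_mac unfolding macaulay_basis_def by blast
  then have "direct_sum (\<lambda>c. s (\<phi> c)) UNIV M (graded_complement cpl nc (W X))"
    using K.direct_sum_graded_complement[OF cpl subspace_W W_hcomp
        subspace_restrict_scalars[OF M_sub] macaulay_basis_lf_mem_W[OF X_mac] W_lift[OF M_sub]]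
    by blast
  then show ?thesis unfolding graded_complement_def .
qed

end
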